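(* For every $\Lambda>0$ there exists a smooth, positive, $\pi$-periodic function $f:\mathbb R\to(0,\infty)$ such that \[\int_0^{2\pi}\big|\partial_\theta\log f(\theta+\tfrac\pi2)-\partial_\theta\log f(\theta)\big|^2\big(f(\theta+\tfrac\pi2)+f(\theta)\big)d\theta<\Lambda\int_0^{2\pi}\frac{(f(\theta+\frac\pi2)-f(\theta))^2}{f(\theta+\frac\pi2)+f(\theta)}\,d\theta.\] *)

theory Defs
  imports "HOL-Analysis.Analysis"
begin

definition smooth_real :: "(real \<Rightarrow> real) \<Rightarrow> bool" where
  "smooth_real f \<longleftrightarrow> (\<forall>k::nat. \<forall>x. ((deriv ^^ k) f) differentiable (at x))"

end

theory Submission
  imports Defs
begin

(* Take f = exp (M cos 4t) (2 + cos 2t). The shift by pi/2 keeps the factor exp (M cos 4t) and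
   flips the sign of cos 2t, so the log-derivative difference does not depend on M, and both
   integrands are the weight exp (M cos 4t) times an explicit trigonometric factor: at most
   16 (1 - cos 4t) on the left and (1 + cos 4t)/2 on the right. As M grows the weight concentrates
   where cos 4t = 1, making the left side negligible. Quantitatively, for M = 64/Lambda the
   pointwise difference of the two integrands exceeds a positive constant plus the derivative of
   an explicit pi/2-periodic function, whose integral over a period vanishes. *)

lemma smooth_realI:
  assumes "f \<in> F"
    and deriv_closed: "\<And>g. g \<in> F \<Longrightarrow> \<exists>g'\<in>F. \<forall>x. (g has_real_derivative g' x) (at x)"
  shows "smooth_real f"
proof -
  have deriv_mem: "deriv g \<in> F" if "g \<in> F" for g
  proof -
    obtain g' where "g' \<in> F" "\<And>x. (g has_real_derivative g' x) (at x)"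
      using deriv_closed[OF \<open>g \<in> F\<close>] by blast
    moreover from this(2) have "deriv g = g'"
      by (auto intro!: ext DERIV_imp_deriv)
    ultimately show ?thesis by simp
  qed
  have "(deriv ^^ k) f \<in> F" for k
    by (induction k) (auto simp: \<open>f \<in> F\<close> deriv_mem)
  then show ?thesis
    unfolding smooth_real_def by (meson deriv_closed real_differentiable_def)
qed

inductive_set exp_trig :: "(real \<Rightarrow> real) set" where
  const: "(\<lambda>x. c) \<in> exp_trig"
| sin: "(\<lambda>x. sin (a * x)) \<in> exp_trig"
| cos: "(\<lambda>x. cos (a * x)) \<in> exp_trig"
| add: "f \<in> exp_trig \<Longrightarrow> g \<in> exp_trig \<Longrightarrow> (\<lambda>x. f x + g x) \<in> exp_trig"
| mult: "f \<in> exp_trig \<Longrightarrow> g \<in> exp_trig \<Longrightarrow> (\<lambda>x. f x * g x) \<in> exp_trig"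
| exp: "f \<in> exp_trig \<Longrightarrow> (\<lambda>x. exp (f x)) \<in> exp_trig"

lemma exp_trig_has_derivative:
  "f \<in> exp_trig \<Longrightarrow> \<exists>f'\<in>exp_trig. \<forall>x. (f has_real_derivative f' x) (at x)"
proof (induction rule: exp_trig.induct)
  case (const c)
  show ?case by (rule bexI[of _ "\<lambda>x. 0"]) (auto intro: exp_trig.intros)
next
  case (sin a)
  show ?case
    by (rule bexI[of _ "\<lambda>x. a * cos (a * x)"]) (auto intro!: exp_trig.intros derivative_eq_intros)
next
  case (cos a)
  have mem: "(\<lambda>x. (- a) * sin (a * x)) \<in> exp_trig"
    by (intro exp_trig.intros)
  have "\<forall>x. ((\<lambda>x. cos (a * x)) has_real_derivative (- a) * sin (a * x)) (at x)"
    by (auto intro!: derivative_eq_intros)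
  then show ?case by (rule bexI[OF _ mem])
next
  case (add f g)
  then obtain f' g' where "f' \<in> exp_trig" "g' \<in> exp_trig"
    "\<forall>x. (f has_real_derivative f' x) (at x)" "\<forall>x. (g has_real_derivative g' x) (at x)"
    by blast
  then show ?case
    by (intro bexI[of _ "\<lambda>x. f' x + g' x"]) (auto intro!: exp_trig.intros derivative_eq_intros)
next
  case (mult f g)
  then obtain f' g' where "f' \<in> exp_trig" "g' \<in> exp_trig"
    "\<forall>x. (f has_real_derivative f' x) (at x)" "\<forall>x. (g has_real_derivative g' x) (at x)"
    by blast
  then show ?case
    by (intro bexI[of _ "\<lambda>x. f' x * g x + f x * g' x"])
      (auto intro!: exp_trig.intros derivative_eq_intros mult)
next
  case (exp f)
  then obtain f' where "f' \<in> exp_trig" "\<forall>x. (f has_real_derivative f' x) (at x)"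
    by blast
  then show ?case
    by (intro bexI[of _ "\<lambda>x. exp (f x) * f' x"])
      (auto intro!: exp_trig.intros derivative_eq_intros exp)
qed

lemma smooth_real_exp_trig: "f \<in> exp_trig \<Longrightarrow> smooth_real f"
  by (rule smooth_realI[OF _ exp_trig_has_derivative])

lemma integral_le_by_exact_derivative:
  fixes a b :: real
  assumes "a \<le> b" "f integrable_on {a..b}" "g integrable_on {a..b}"
    and "\<And>t. (G has_real_derivative G' t) (at t)" "G a = G b"
    and "\<And>t. t \<in> {a..b} \<Longrightarrow> f t \<le> g t + G' t"
  shows "integral {a..b} f \<le> integral {a..b} g"
proof -
  have "(G' has_integral 0) {a..b}"
    using fundamental_theorem_of_calculus[of a b G G'] assms(1,4,5)
    by (simp add: has_real_derivative_iff_has_vector_derivative has_vector_derivative_at_within)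
  then have "((\<lambda>t. g t + G' t) has_integral integral {a..b} g) {a..b}"
    using has_integral_add[OF integrable_integral[OF assms(3)]] by fastforce
  then show ?thesis
    using has_integral_le[OF integrable_integral[OF assms(2)]] assms(6) by blast
qed

definition energy_density :: "(real \<Rightarrow> real) \<Rightarrow> real \<Rightarrow> real" where
  "energy_density f \<theta> =
     (deriv (\<lambda>t. ln (f t)) (\<theta> + pi/2) - deriv (\<lambda>t. ln (f t)) \<theta>)\<^sup>2 * (f (\<theta> + pi/2) + f \<theta>)"

definition discrepancy_density :: "(real \<Rightarrow> real) \<Rightarrow> real \<Rightarrow> real" where
  "discrepancy_density f \<theta> = (f (\<theta> + pi/2) - f \<theta>)\<^sup>2 / (f (\<theta> + pi/2) + f \<theta>)"

definition profile :: "real \<Rightarrow> real \<Rightarrow> real" where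
  "profile M t = exp (M * cos (4*t)) * (2 + cos (2*t))"

lemma two_plus_cos_pos: "2 + cos x > 0" and two_minus_cos_pos: "2 - cos x > 0" for x :: real
  using cos_ge_minus_one[of x] cos_le_one[of x] by linarith+

lemma profile_pos: "profile M t > 0"
  by (simp add: profile_def two_plus_cos_pos)

lemma profile_periodic: "profile M (t + pi) = profile M t"
  by (simp add: profile_def distrib_left cos_add)

lemma profile_shift: "profile M (t + pi/2) = exp (M * cos (4*t)) * (2 - cos (2*t))"
  by (simp add: profile_def distrib_left cos_add)

lemma smooth_real_profile: "smooth_real (profile M)"
proof -
  have "(\<lambda>t. exp (M * cos (4*t)) * (2 + cos (2*t))) \<in> exp_trig"
    by (intro exp_trig.intros)
  then show ?thesis
    unfolding profile_def[abs_def] by (rule smooth_real_exp_trig)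
qed

lemma deriv_ln_profile:
  "deriv (\<lambda>t. ln (profile M t)) t = - 4*M * sin (4*t) - 2 * sin (2*t) / (2 + cos (2*t))"
proof -
  have "(\<lambda>t. ln (profile M t)) = (\<lambda>t. M * cos (4*t) + ln (2 + cos (2*t)))"
    by (simp add: profile_def ln_mult two_plus_cos_pos[THEN less_imp_neq, symmetric])
  moreover have "((\<lambda>t. M * cos (4*t) + ln (2 + cos (2*t))) has_real_derivative
      - 4*M * sin (4*t) - 2 * sin (2*t) / (2 + cos (2*t))) (at t)"
    using two_plus_cos_pos[of "2*t"] by (auto intro!: derivative_eq_intros simp: field_simps)
  ultimately show ?thesis
    by (simp add: DERIV_imp_deriv)
qed

lemma energy_density_profile:
  "energy_density (profile M) =
     (\<lambda>t. 256 * (sin (2*t))\<^sup>2 / (4 - (cos (2*t))\<^sup>2)\<^sup>2 * exp (M * cos (4*t)))"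
proof
  fix t :: real
  let ?S = "sin (2*t)" and ?C = "cos (2*t)"
  have "deriv (\<lambda>t. ln (profile M t)) (t + pi/2) - deriv (\<lambda>t. ln (profile M t)) t
      = 2 * ?S / (2 - ?C) + 2 * ?S / (2 + ?C)"
    by (simp add: deriv_ln_profile distrib_left sin_add cos_add)
  also have "\<dots> = 8 * ?S / (4 - ?C\<^sup>2)"
    using two_plus_cos_pos[of "2*t"] two_minus_cos_pos[of "2*t"]
    by (simp add: field_simps power2_eq_square)
  finally show "energy_density (profile M) t =
      256 * ?S\<^sup>2 / (4 - ?C\<^sup>2)\<^sup>2 * exp (M * cos (4*t))"
    unfolding energy_density_def profile_shift by (simp add: profile_def power_divide field_simps)
qed

lemma discrepancy_density_profile:
  "discrepancy_density (profile M) = (\<lambda>t. (1 + cos (4*t)) / 2 * exp (M * cos (4*t)))"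
proof
  fix t :: real
  have "(1 + cos (4*t)) / 2 = (cos (2*t))\<^sup>2"
    using cos_double_cos[of "2*t"] by (simp add: mult.assoc)
  then show "discrepancy_density (profile M) t = (1 + cos (4*t)) / 2 * exp (M * cos (4*t))"
    unfolding discrepancy_density_def profile_shift
    by (simp add: profile_def field_simps power2_eq_square)
qed

lemma energy_density_profile_le:
  "energy_density (profile M) t \<le> 16 * (1 - cos (4*t)) * exp (M * cos (4*t))"
proof -
  let ?S = "sin (2*t)" and ?C = "cos (2*t)"
  have "3 \<le> 4 - ?C\<^sup>2"
    using abs_cos_le_one[of "2*t"] by (simp add: abs_square_le_1)
  then have "9 \<le> (4 - ?C\<^sup>2)\<^sup>2"
    using power_mono[of 3 "4 - ?C\<^sup>2" 2] by simp
  then have "256 * ?S\<^sup>2 / (4 - ?C\<^sup>2)\<^sup>2 \<le> 256 * ?S\<^sup>2 / 9"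
    by (intro divide_left_mono) auto
  also have "\<dots> \<le> 32 * ?S\<^sup>2"
    by simp
  also have "\<dots> = 16 * (1 - cos (4*t))"
    using cos_double_sin[of "2*t"] by (simp add: mult.assoc)
  finally show ?thesis
    unfolding energy_density_profile by (rule mult_right_mono) simp
qed

definition corrector :: "real \<Rightarrow> real \<Rightarrow> real" where
  "corrector L t = - (L/8 + 4 * (1 - cos (4*t))) * sin (4*t) * exp (64/L * cos (4*t))"

lemma corrector_has_derivative:
  fixes L t :: real
  defines "q \<equiv> L/8 + 4 * (1 - cos (4*t))"
  shows "(corrector L has_real_derivative
      exp (64/L * cos (4*t)) * (4 * (64/L) * q * (sin (4*t))\<^sup>2 - 4 * cos (4*t) * q - 16 * (sin (4*t))\<^sup>2))
      (at t)"
proof -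
  have "((\<lambda>t. - (L/8 + 4 * (1 - cos (4*t))) * sin (4*t) * exp (M * cos (4*t))) has_real_derivative
      exp (M * cos (4*t)) * (4 * M * q * (sin (4*t))\<^sup>2 - 4 * cos (4*t) * q - 16 * (sin (4*t))\<^sup>2))
      (at t)" for M
    \<comment> \<open>stated for an arbitrary M so that the algebra need not reason about the division 64/L\<close>
    unfolding q_def
    by (auto intro!: derivative_eq_intros simp: power2_eq_square) (simp add: algebra_simps)
  then show ?thesis
    unfolding corrector_def[abs_def] .
qed

lemma corrector_periodic: "corrector L (2*pi) = corrector L 0"
  using sin_npi[of 8] by (simp add: corrector_def)

lemma profile_densities_le_plus_deriv_corrector:
  fixes L t :: real
  assumes "L > 0"
  shows "energy_density (profile (64/L)) t + L/2 * exp (- (64/L))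
    \<le> L * discrepancy_density (profile (64/L)) t + deriv (corrector L) t"
proof -
  define M x E q where "M = 64/L" and "x = cos (4*t)" and "E = exp (M * x)"
    and "q = L/8 + 4 * (1 - x)"
  define P where "P = 4*M*q*(1 - x\<^sup>2) - 4*x*q - 16*(1 - x\<^sup>2)"
  have x: "-1 \<le> x" "x \<le> 1" "(sin (4*t))\<^sup>2 = 1 - x\<^sup>2"
    by (simp_all add: x_def sin_squared_eq)
  have "exp (-M) \<le> E"
    using x \<open>L > 0\<close> by (simp add: E_def M_def field_simps)
  then have "L/2 * exp (-M) \<le> L/2 * E"
    using \<open>L > 0\<close> by simp
  \<comment> \<open>The constants in q and M are chosen so that the terms of order 0 and 1 in 1 - x cancel.\<close>
  have "L/2 * (1 + x) + P - (16 * (1 - x) + L/2) = 1024/L * (1 - x)\<^sup>2 * (1 + x)"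
    using \<open>L > 0\<close> by (simp add: P_def M_def q_def field_simps power2_eq_square)
  also have "\<dots> \<ge> 0"
    using x \<open>L > 0\<close> by simp
  finally have poly: "16 * (1 - x) + L/2 \<le> L/2 * (1 + x) + P"
    by simp
  have "energy_density (profile M) t + L/2 * exp (-M) \<le> 16 * (1 - x) * E + L/2 * E"
    using energy_density_profile_le[of M t] \<open>L/2 * exp (-M) \<le> L/2 * E\<close>
    unfolding E_def x_def by linarith
  also have "\<dots> = (16 * (1 - x) + L/2) * E"
    by (simp add: algebra_simps)
  also have "\<dots> \<le> (L/2 * (1 + x) + P) * E"
    using poly by (simp add: E_def)
  also have "\<dots> = L * ((1 + x) / 2 * E) + E * P"
    by (simp add: algebra_simps)
  also have "\<dots> = L * discrepancy_density (profile M) t + deriv (corrector L) t"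
    using DERIV_imp_deriv[OF corrector_has_derivative] x(3)
    by (simp add: discrepancy_density_profile E_def M_def P_def q_def x_def)
  finally show ?thesis
    by (simp add: M_def)
qed

lemma integral_energy_density_profile_lt:
  fixes L :: real
  assumes "L > 0"
  shows "integral {0..2*pi} (energy_density (profile (64/L)))
    < L * integral {0..2*pi} (discrepancy_density (profile (64/L)))"
proof -
  let ?f = "profile (64/L)" and ?c = "L/2 * exp (- (64/L))"
  have "4 - (cos x)\<^sup>2 \<noteq> 0" for x :: real
    using abs_square_le_1[THEN iffD2, OF abs_cos_le_one[of x]] by linarith
  then have "continuous_on {0..2*pi} (energy_density ?f)"
    unfolding energy_density_profile by (intro continuous_intros) auto
  then have int_energy: "energy_density ?f integrable_on {0..2*pi}"
    by (rule integrable_continuous_interval)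
  have "continuous_on {0..2*pi} (discrepancy_density ?f)"
    unfolding discrepancy_density_profile by (intro continuous_intros) auto
  then have int_discrepancy: "discrepancy_density ?f integrable_on {0..2*pi}"
    by (rule integrable_continuous_interval)
  have "integral {0..2*pi} (energy_density ?f) + 2*pi * ?c
      = integral {0..2*pi} (\<lambda>t. energy_density ?f t + ?c)"
    by (subst integral_add) (auto simp: int_energy)
  also have "\<dots> \<le> integral {0..2*pi} (\<lambda>t. L * discrepancy_density ?f t)"
  proof (rule integral_le_by_exact_derivative)
    show "(corrector L has_real_derivative deriv (corrector L) t) (at t)" for t
      by (metis corrector_has_derivative DERIV_imp_deriv)
  qed (use int_energy int_discrepancy assms profile_densities_le_plus_deriv_corrector
        corrector_periodic in \<open>auto intro: integrable_add\<close>)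
  also have "\<dots> = L * integral {0..2*pi} (discrepancy_density ?f)"
    by simp
  finally have "integral {0..2*pi} (energy_density ?f) + 2*pi * ?c
      \<le> L * integral {0..2*pi} (discrepancy_density ?f)" .
  moreover have "0 < 2*pi * ?c"
    using assms by simp
  ultimately show ?thesis
    by linarith
qed

theorem lemma8p1:
  fixes \<Lambda> :: real
  assumes "\<Lambda> > 0"
  shows "\<exists>f :: real \<Rightarrow> real.
           smooth_real f \<and> (\<forall>x. f x > 0) \<and> (\<forall>x. f (x + pi) = f x) \<and>
           integral {0..2*pi}
             (\<lambda>\<theta>. (deriv (\<lambda>t. ln (f t)) (\<theta> + pi/2) - deriv (\<lambda>t. ln (f t)) \<theta>)\<^sup>2
                   * (f (\<theta> + pi/2) + f \<theta>))
           < \<Lambda> * integral {0..2*pi}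
             (\<lambda>\<theta>. (f (\<theta> + pi/2) - f \<theta>)\<^sup>2 / (f (\<theta> + pi/2) + f \<theta>))"
proof -
  let ?f = "profile (64/\<Lambda>)"
  have "integral {0..2*pi} (energy_density ?f) < \<Lambda> * integral {0..2*pi} (discrepancy_density ?f)"
    using assms by (rule integral_energy_density_profile_lt)
  then show ?thesis
    using smooth_real_profile profile_pos profile_periodic
    unfolding energy_density_def[abs_def] discrepancy_density_def[abs_def] by blast
qed

end
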